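(* There is a sufficiently large absolute constant $C>0$ such that the following holds. Assume $1\le d\le 10n$, and let $k_0\in[d]$, $n_0\in[n]$ satisfy $k_0n_0^2\ge Cn^2$. Then $\mathbb P(\mathcal D(k_0,n_0))\ge 1-e^{-n}$.
   Context: Let $\pi_n^1,\dots,\pi_n^d$ be independent uniformly random permutations of $[n]$. For $L\subset[d]$ and $I,J\subset[n]$ put $e_L(I,J)=\sum_{\ell\in L}\sum_{i\in I}\mathbf 1(\pi_n^\ell(i)\in J)$. The no-holes event is $$\mathcal D(k_0,n_0)=\bigcap_{L\subset[d]:|L|\ge k_0}\ \bigcap_{I,J\subset[n]:|I|,|J|\ge n_0}\Big\{e_L(I,J)\ge\frac{|L||I||J|}{2n}\Big\}.$$ *)

theory Defs
  imports "HOL-Combinatorics.Permutations" Complex_Main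
begin

text \<open>Sample space: d-tuples (indexed by [d] = {1..d}) of permutations of [n] = {1..n}.
  Independent uniform permutations = uniform distribution on this finite set.\<close>
definition perm_tuples :: "nat \<Rightarrow> nat \<Rightarrow> (nat \<Rightarrow> nat \<Rightarrow> nat) set" where
  "perm_tuples d n = Pi\<^sub>E {1..d} (\<lambda>_. {p. p permutes {1..n}})"

definition e_L :: "(nat \<Rightarrow> nat \<Rightarrow> nat) \<Rightarrow> nat set \<Rightarrow> nat set \<Rightarrow> nat set \<Rightarrow> nat" where
  "e_L \<pi> L I J = (\<Sum>l\<in>L. \<Sum>i\<in>I. (if \<pi> l i \<in> J then 1 else 0))"

definition no_holes :: "nat \<Rightarrow> nat \<Rightarrow> nat \<Rightarrow> nat \<Rightarrow> (nat \<Rightarrow> nat \<Rightarrow> nat) \<Rightarrow> bool" where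
  "no_holes d n k0 n0 \<pi> \<longleftrightarrow>
     (\<forall>L. L \<subseteq> {1..d} \<longrightarrow> card L \<ge> k0 \<longrightarrow>
       (\<forall>I J. I \<subseteq> {1..n} \<longrightarrow> J \<subseteq> {1..n} \<longrightarrow> card I \<ge> n0 \<longrightarrow> card J \<ge> n0 \<longrightarrow>
          real (e_L \<pi> L I J) \<ge> real (card L) * real (card I) * real (card J) / (2 * real n)))"

definition prob_no_holes :: "nat \<Rightarrow> nat \<Rightarrow> nat \<Rightarrow> nat \<Rightarrow> real" where
  "prob_no_holes d n k0 n0 =
     real (card {\<pi> \<in> perm_tuples d n. no_holes d n k0 n0 \<pi>}) / real (card (perm_tuples d n))"

end

theory Submission
  imports Defs
begin

text \<open>
  A union bound over the at most \<open>2\<^sup>d 4\<^sup>n\<close> triples \<open>(L, I, J)\<close> combined with a Chernoff-type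
  estimate for each of them. For fixed \<open>L, I, J\<close>, Markov's inequality applied to \<open>2\<^bsup>-e\<^sub>L(I,J)\<^esup>\<close>
  shows that \<open>e\<^sub>L(I,J)\<close> falls below half its mean \<open>\<mu> = |L||I||J|/n\<close> with probability at most
  \<open>e\<^bsup>-\<mu>/8\<^esup>\<close>, since the permutations are independent and for one uniform permutation \<open>p\<close>
  \<open>E 2\<^bsup>-|{i \<in> I. p i \<in> J}|\<^esup> = 2\<^bsup>-|I|\<^esup> \<Sum>\<^bsub>S \<subseteq> I\<^esub> P(p S \<inter> J = {}) \<le> (1 - |J|/2n)\<^bsup>|I|\<^esup>\<close>,
  using the negative correlation bound \<open>P(p S \<subseteq> K) \<le> (|K|/n)\<^bsup>|S|\<^esup>\<close>.
  When \<open>k\<^sub>0 n\<^sub>0\<^sup>2 \<ge> 200 n\<^sup>2\<close> we have \<open>\<mu> \<ge> 200 n\<close>, which beats the \<open>2\<^bsup>12n\<^esup>\<close> triples.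
\<close>

lemma sum_card_filter_swap:
  assumes "finite A" and "finite B"
  shows "(\<Sum>a\<in>A. card {b\<in>B. R a b}) = (\<Sum>b\<in>B. card {a\<in>A. R a b})"
proof -
  have "(\<Sum>a\<in>A. card {b\<in>B. R a b}) = (\<Sum>a\<in>A. \<Sum>b\<in>B. of_bool (R a b))"
    using assms(2) by (simp add: Int_def)
  also have "\<dots> = (\<Sum>b\<in>B. \<Sum>a\<in>A. of_bool (R a b))"
    by (rule sum.swap)
  also have "\<dots> = (\<Sum>b\<in>B. card {a\<in>A. R a b})"
    using assms(1) by (simp add: Int_def)
  finally show ?thesis .
qed

lemma card_filter_add_card_filter_not:
  assumes "finite A"
  shows "card {x\<in>A. P x} + card {x\<in>A. \<not> P x} = card A"
proof -
  have "A = {x\<in>A. P x} \<union> {x\<in>A. \<not> P x}" and "{x\<in>A. P x} \<inter> {x\<in>A. \<not> P x} = {}"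
    by auto
  then show ?thesis
    using assms by (metis card_Un_disjoint finite_Un)
qed

lemma sum_Pow_power_card:
  assumes "finite I"
  shows "(\<Sum>X\<in>Pow I. (c::'a::comm_semiring_1) ^ card X) = (1 + c) ^ card I"
  using prod_add[OF assms, of "\<lambda>_. c" "\<lambda>_. 1"] by (simp add: add.commute)

subsection \<open>Uniform permutations mapping a set into a set\<close>

lemma card_permutes_image_insert_mono:
  assumes "finite U" and x: "x \<in> U" "x \<notin> S" and y: "y \<in> U" "y \<notin> S"
  shows "card {p. p permutes U \<and> p ` insert y S \<subseteq> K} \<le> card {p. p permutes U \<and> p ` insert x S \<subseteq> K}"
proof -
  let ?t = "Transposition.transpose x y"
  have "inj_on (\<lambda>p. p \<circ> ?t) X" for X :: "('a \<Rightarrow> 'a) set"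
    by (rule inj_onI) (metis comp_assoc comp_id transpose_comp_involutory)
  moreover have "(\<lambda>p. p \<circ> ?t) ` {p. p permutes U \<and> p ` insert y S \<subseteq> K}
      \<subseteq> {p. p permutes U \<and> p ` insert x S \<subseteq> K}"
  proof (rule image_subsetI)
    fix p assume "p \<in> {p. p permutes U \<and> p ` insert y S \<subseteq> K}"
    then have p: "p permutes U" "p ` insert y S \<subseteq> K"
      by simp_all
    have "p \<circ> ?t permutes U"
      by (rule permutes_compose[OF permutes_swap_id[OF x(1) y(1)] p(1)])
    moreover have "(p \<circ> ?t) ` insert x S \<subseteq> K"
      using p(2) x(2) y(2) by (auto simp: Transposition.transpose_def)
    ultimately show "p \<circ> ?t \<in> {p. p permutes U \<and> p ` insert x S \<subseteq> K}"
      by simp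
  qed
  moreover have "finite {p. p permutes U \<and> p ` insert x S \<subseteq> K}"
    using finite_permutations[OF \<open>finite U\<close>] by (rule finite_subset[rotated]) auto
  ultimately show ?thesis
    by (rule card_inj_on_le)
qed

lemma card_permutes_image_insert_eq:
  assumes "finite U" and "x \<in> U" "x \<notin> S" and "y \<in> U" "y \<notin> S"
  shows "card {p. p permutes U \<and> p ` insert y S \<subseteq> K} = card {p. p permutes U \<and> p ` insert x S \<subseteq> K}"
  using card_permutes_image_insert_mono[OF assms] card_permutes_image_insert_mono[OF assms(1,4,5,2,3)]
  by (rule antisym)

lemma card_permutes_preimage_outside:
  assumes "finite U" and "S \<subseteq> U" and "K \<subseteq> U" and "p permutes U" and "p ` S \<subseteq> K"
  shows "card {y\<in>U - S. p y \<in> K} = card K - card S"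
proof -
  have "inj_on p U"
    using \<open>p permutes U\<close> permutes_inj_on by blast
  moreover have "p ` {y\<in>U. p y \<in> K} = K"
    using permutes_image[OF \<open>p permutes U\<close>] \<open>K \<subseteq> U\<close> by force
  ultimately have "card {y\<in>U. p y \<in> K} = card K"
    by (metis (no_types, lifting) card_image inj_on_subset mem_Collect_eq subsetI)
  moreover have "{y\<in>U - S. p y \<in> K} = {y\<in>U. p y \<in> K} - S" and "S \<subseteq> {y\<in>U. p y \<in> K}"
    using assms by auto
  ultimately show ?thesis
    using finite_subset[OF \<open>S \<subseteq> U\<close> \<open>finite U\<close>] by (simp add: card_Diff_subset)
qed

text \<open>
  Double counting the pairs \<open>(p, y)\<close> with \<open>p S \<subseteq> K\<close>, \<open>y \<notin> S\<close> and \<open>p y \<in> K\<close>: by the symmetry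
  above, every \<open>y \<in> U - S\<close> contributes equally.
\<close>

lemma card_permutes_image_insert:
  assumes "finite U" and "S \<subseteq> U" and "K \<subseteq> U" and "x \<in> U" "x \<notin> S"
  shows "card {p. p permutes U \<and> p ` insert x S \<subseteq> K} * (card U - card S)
       = card {p. p permutes U \<and> p ` S \<subseteq> K} * (card K - card S)"
proof -
  define A where "A = {p. p permutes U \<and> p ` S \<subseteq> K}"
  have "finite A"
    unfolding A_def using finite_permutations[OF \<open>finite U\<close>] by (rule finite_subset[rotated]) auto
  have "{p\<in>A. p y \<in> K} = {p. p permutes U \<and> p ` insert y S \<subseteq> K}" for y
    by (auto simp: A_def)
  then have "card {p\<in>A. p y \<in> K} = card {p. p permutes U \<and> p ` insert x S \<subseteq> K}"
    if "y \<in> U - S" for y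
    using card_permutes_image_insert_eq[of U x S y K] that assms by simp
  then have "(\<Sum>y\<in>U - S. card {p\<in>A. p y \<in> K})
      = card (U - S) * card {p. p permutes U \<and> p ` insert x S \<subseteq> K}"
    by simp
  also have "(\<Sum>y\<in>U - S. card {p\<in>A. p y \<in> K}) = (\<Sum>p\<in>A. card {y\<in>U - S. p y \<in> K})"
    using \<open>finite A\<close> \<open>finite U\<close> by (intro sum_card_filter_swap) simp_all
  also have "\<dots> = card A * (card K - card S)"
    using card_permutes_preimage_outside[OF \<open>finite U\<close> \<open>S \<subseteq> U\<close> \<open>K \<subseteq> U\<close>] by (simp add: A_def)
  finally show ?thesis
    using card_Diff_subset[OF finite_subset[OF \<open>S \<subseteq> U\<close> \<open>finite U\<close>] \<open>S \<subseteq> U\<close>]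
    by (simp add: A_def mult.commute)
qed

lemma card_permutes_image_subset_le:
  assumes "finite U" and "K \<subseteq> U" and "S \<subseteq> U"
  shows "card {p. p permutes U \<and> p ` S \<subseteq> K} * card U ^ card S \<le> fact (card U) * card K ^ card S"
  using finite_subset[OF \<open>S \<subseteq> U\<close> \<open>finite U\<close>] \<open>S \<subseteq> U\<close>
proof (induction S rule: finite_induct)
  case empty
  then show ?case
    using card_permutations[OF refl \<open>finite U\<close>] by simp
next
  case (insert x S)
  define a where "a = card {p. p permutes U \<and> p ` S \<subseteq> K}"
  define c where "c = card {p. p permutes U \<and> p ` insert x S \<subseteq> K}"
  have IH: "a * card U ^ card S \<le> fact (card U) * card K ^ card S"
    using insert by (simp add: a_def)
  have rec: "c * (card U - card S) = a * (card K - card S)"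
    using card_permutes_image_insert[OF \<open>finite U\<close> _ \<open>K \<subseteq> U\<close>, of S x] insert by (simp add: a_def c_def)
  have "c \<le> a"
    unfolding a_def c_def using finite_permutations[OF \<open>finite U\<close>]
    by (intro card_mono) (auto intro: finite_subset[rotated])
  have "card S < card U"
    using insert \<open>finite U\<close> by (metis insert_subset psubsetI psubset_card_mono)
  have step: "c * card U \<le> a * card K"
  proof (cases "card S \<le> card K")
    case True
    have "c * card U = c * (card U - card S) + c * card S"
      using \<open>card S < card U\<close> by (simp flip: add_mult_distrib2)
    also have "\<dots> \<le> a * (card K - card S) + a * card S"
      using rec \<open>c \<le> a\<close> by simp
    also have "\<dots> = a * card K"
      using True by (simp flip: add_mult_distrib2)
    finally show ?thesis .
  next
    case False
    then show ?thesis
      using rec \<open>card S < card U\<close> by simp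
  qed
  have "c * card U ^ card (insert x S) = (c * card U) * card U ^ card S"
    using insert by simp
  also have "\<dots> \<le> (a * card U ^ card S) * card K"
    using step by (simp add: mult.commute mult.left_commute)
  also have "\<dots> \<le> fact (card U) * card K ^ card (insert x S)"
    using mult_right_mono[OF IH, of "card K"] insert by simp
  finally show ?case
    by (simp add: c_def)
qed

subsection \<open>Exponential moment of the number of hits of one permutation\<close>

lemma sum_permutes_two_pow_card_misses:
  assumes "finite U" and "card U > 0" and "I \<subseteq> U" and "J \<subseteq> U"
  shows "(\<Sum>p | p permutes U. (2::real) ^ card {i\<in>I. p i \<notin> J})
     \<le> fact (card U) * (1 + real (card U - card J) / real (card U)) ^ card I"
proof -
  define c where "c = real (card U - card J) / real (card U)"
  have "finite I"
    using assms finite_subset by blast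
  have two_pow: "(2::real) ^ card {i\<in>I. p i \<notin> J} = real (card {S\<in>Pow I. p ` S \<subseteq> U - J})"
    if "p permutes U" for p
  proof -
    have "{S\<in>Pow I. p ` S \<subseteq> U - J} = Pow {i\<in>I. p i \<notin> J}"
      using that \<open>I \<subseteq> U\<close> by (auto dest: permutes_in_image)
    then show ?thesis
      using \<open>finite I\<close> by (simp add: card_Pow)
  qed
  have count: "real (card {p. p permutes U \<and> p ` S \<subseteq> U - J}) \<le> fact (card U) * c ^ card S"
    if "S \<subseteq> I" for S
  proof -
    have nat_bound: "card {p. p permutes U \<and> p ` S \<subseteq> U - J} * card U ^ card S
        \<le> fact (card U) * (card U - card J) ^ card S"
      using card_permutes_image_subset_le[of U "U - J" S] assms that
      by (simp add: card_Diff_subset finite_subset)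
    have "real (card {p. p permutes U \<and> p ` S \<subseteq> U - J}) * real (card U) ^ card S
        \<le> fact (card U) * real (card U - card J) ^ card S"
      using of_nat_mono[OF nat_bound, where 'a=real] by simp
    then show ?thesis
      using \<open>card U > 0\<close> by (simp add: c_def power_divide pos_le_divide_eq)
  qed
  have "(\<Sum>p | p permutes U. (2::real) ^ card {i\<in>I. p i \<notin> J})
      = (\<Sum>p | p permutes U. real (card {S\<in>Pow I. p ` S \<subseteq> U - J}))"
    by (rule sum.cong) (simp_all add: two_pow)
  also have "\<dots> = real (\<Sum>p | p permutes U. card {S\<in>Pow I. p ` S \<subseteq> U - J})"
    by (rule of_nat_sum[symmetric])
  also have "\<dots> = real (\<Sum>S\<in>Pow I. card {p\<in>{p. p permutes U}. p ` S \<subseteq> U - J})"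
    using finite_permutations[OF \<open>finite U\<close>] \<open>finite I\<close> by (subst sum_card_filter_swap) simp_all
  also have "\<dots> = (\<Sum>S\<in>Pow I. real (card {p. p permutes U \<and> p ` S \<subseteq> U - J}))"
    by simp
  also have "\<dots> \<le> (\<Sum>S\<in>Pow I. fact (card U) * c ^ card S)"
    by (rule sum_mono) (simp add: count)
  also have "\<dots> = fact (card U) * (1 + c) ^ card I"
    by (simp add: sum_Pow_power_card[OF \<open>finite I\<close>] flip: sum_distrib_left)
  finally show ?thesis
    by (simp add: c_def)
qed

lemma sum_permutes_half_pow_card_hits:
  assumes "finite U" and "card U > 0" and "I \<subseteq> U" and "J \<subseteq> U"
  shows "(\<Sum>p | p permutes U. (1/2::real) ^ card {i\<in>I. p i \<in> J})
     \<le> fact (card U) * exp (- real (card I) * real (card J) / (2 * real (card U)))"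
proof -
  define q where "q = real (card J) / (2 * real (card U))"
  have "finite I"
    using assms finite_subset by blast
  have "(2::real) ^ card I = 2 ^ card {i\<in>I. p i \<in> J} * 2 ^ card {i\<in>I. p i \<notin> J}" for p
    using card_filter_add_card_filter_not[OF \<open>finite I\<close>] by (simp flip: power_add)
  then have half_pow: "(1/2::real) ^ card {i\<in>I. p i \<in> J} = 2 ^ card {i\<in>I. p i \<notin> J} / 2 ^ card I" for p
    by (simp add: field_simps)
  have "card J \<le> card U"
    using card_mono[OF \<open>finite U\<close> \<open>J \<subseteq> U\<close>] .
  then have mean: "(1 + real (card U - card J) / real (card U)) / 2 = 1 - q" and "q \<le> 1"
    using \<open>card U > 0\<close> by (simp_all add: q_def field_simps)
  have "(\<Sum>p | p permutes U. (1/2::real) ^ card {i\<in>I. p i \<in> J})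
      = (\<Sum>p | p permutes U. (2::real) ^ card {i\<in>I. p i \<notin> J}) / 2 ^ card I"
    by (simp add: half_pow sum_divide_distrib)
  also have "\<dots> \<le> fact (card U) * (1 + real (card U - card J) / real (card U)) ^ card I / 2 ^ card I"
    by (rule divide_right_mono[OF sum_permutes_two_pow_card_misses[OF assms]]) simp
  also have "\<dots> = fact (card U) * (1 - q) ^ card I"
    by (simp only: mean flip: times_divide_eq_right power_divide)
  also have "\<dots> \<le> fact (card U) * exp (- q) ^ card I"
    using exp_ge_add_one_self[of "- q"] \<open>q \<le> 1\<close> by (intro mult_left_mono power_mono) simp_all
  also have "\<dots> = fact (card U) * exp (- real (card I) * real (card J) / (2 * real (card U)))"
    by (simp add: q_def exp_of_nat_mult[symmetric])
  finally show ?thesis .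
qed

subsection \<open>Independent permutations\<close>

lemma card_perm_tuples: "card (perm_tuples d n) = fact n ^ d"
  unfolding perm_tuples_def by (simp add: card_PiE card_permutations)

lemma finite_perm_tuples: "finite (perm_tuples d n)"
  unfolding perm_tuples_def by (rule finite_PiE) (auto intro: finite_permutations)

lemma e_L_eq_sum_card:
  assumes "finite I"
  shows "e_L \<pi> L I J = (\<Sum>l\<in>L. card {i\<in>I. \<pi> l i \<in> J})"
  unfolding e_L_def using assms by (simp add: Collect_conj_eq Int_commute flip: sum.inter_filter)

lemma sum_perm_tuples_half_pow_e_L:
  assumes "n > 0" and "L \<subseteq> {1..d}" and "I \<subseteq> {1..n}" and "J \<subseteq> {1..n}"
  shows "(\<Sum>\<pi>\<in>perm_tuples d n. (1/2::real) ^ e_L \<pi> L I J)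
     \<le> fact n ^ d * exp (- real (card L) * real (card I) * real (card J) / (2 * real n))"
proof -
  define r where "r = exp (- real (card I) * real (card J) / (2 * real n))"
  define f where "f l p = (if l \<in> L then (1/2::real) ^ card {i\<in>I. p i \<in> J} else 1)" for l p
  have "finite I"
    using assms finite_subset by blast
  have "(1/2::real) ^ e_L \<pi> L I J = (\<Prod>l\<in>{1..d}. f l (\<pi> l))" for \<pi>
    using \<open>L \<subseteq> {1..d}\<close>
    by (simp add: e_L_eq_sum_card[OF \<open>finite I\<close>] power_sum f_def prod.If_cases Int_absorb1)
  then have "(\<Sum>\<pi>\<in>perm_tuples d n. (1/2::real) ^ e_L \<pi> L I J)
      = (\<Sum>\<pi>\<in>Pi\<^sub>E {1..d} (\<lambda>_. {p. p permutes {1..n}}). \<Prod>l\<in>{1..d}. f l (\<pi> l))"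
    unfolding perm_tuples_def by simp
  also have "\<dots> = (\<Prod>l\<in>{1..d}. \<Sum>p | p permutes {1..n}. f l p)"
    by (rule prod_sum_PiE[symmetric]) (auto intro: finite_permutations)
  also have "\<dots> \<le> (\<Prod>l\<in>{1..d}. fact n * (if l \<in> L then r else 1))"
  proof (rule prod_mono, safe)
    fix l
    show "0 \<le> (\<Sum>p | p permutes {1..n}. f l p)"
      unfolding f_def by (auto intro: sum_nonneg)
    show "(\<Sum>p | p permutes {1..n}. f l p) \<le> fact n * (if l \<in> L then r else 1)"
      using sum_permutes_half_pow_card_hits[of "{1..n}" I J] card_permutations[of "{1..n}" n] assms
      by (simp add: f_def r_def)
  qed
  also have "\<dots> = fact n ^ d * r ^ card L"
    using \<open>L \<subseteq> {1..d}\<close> by (simp add: prod.distrib prod.If_cases Int_absorb1)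
  also have "\<dots> = fact n ^ d * exp (- real (card L) * real (card I) * real (card J) / (2 * real n))"
    by (simp add: r_def exp_of_nat_mult[symmetric])
  finally show ?thesis .
qed

lemma ln_2_le_3_div_4: "ln (2::real) \<le> 3/4"
proof -
  have "1 + 3/4 + (3/4)\<^sup>2/2 \<le> exp (3/4::real)"
    by (rule exp_lower_Taylor_quadratic) simp
  then have "2 \<le> exp (3/4::real)"
    by (simp add: power2_eq_square)
  then show ?thesis
    by (metis ln_exp ln_le_cancel_iff exp_gt_zero zero_less_numeral)
qed

lemma card_e_L_small_le:
  assumes "n > 0" and "L \<subseteq> {1..d}" and "I \<subseteq> {1..n}" and "J \<subseteq> {1..n}"
  shows "real (card {\<pi>\<in>perm_tuples d n.
      real (e_L \<pi> L I J) < real (card L) * real (card I) * real (card J) / (2 * real n)})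
    \<le> real (card (perm_tuples d n)) * exp (- real (card L) * real (card I) * real (card J) / (8 * real n))"
proof -
  define h where "h = real (card L) * real (card I) * real (card J) / (2 * real n)"
  define B where "B = {\<pi>\<in>perm_tuples d n. real (e_L \<pi> L I J) < h}"
  have "h \<ge> 0"
    by (simp add: h_def)
  have half_pow: "(1/2::real) ^ m = exp (- ln 2 * real m)" for m
    using exp_of_nat_mult[of m "- ln (2::real)"] by (simp add: exp_minus mult.commute)
  have "exp (- ln 2 * h) \<le> (1/2::real) ^ e_L \<pi> L I J" if "\<pi> \<in> B" for \<pi>
    using that by (simp add: B_def half_pow mult_le_cancel_left)
  then have "real (card B) * exp (- ln 2 * h) \<le> (\<Sum>\<pi>\<in>B. (1/2::real) ^ e_L \<pi> L I J)"
    using sum_mono[of B "\<lambda>_. exp (- ln 2 * h)"] by simp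
  also have "\<dots> \<le> (\<Sum>\<pi>\<in>perm_tuples d n. (1/2::real) ^ e_L \<pi> L I J)"
    by (rule sum_mono2[OF finite_perm_tuples]) (auto simp: B_def)
  also have "\<dots> \<le> fact n ^ d * exp (- h)"
    using sum_perm_tuples_half_pow_e_L[OF assms] by (simp add: h_def)
  finally have "real (card B) * exp (- ln 2 * h) * exp (ln 2 * h) \<le> fact n ^ d * exp (- h) * exp (ln 2 * h)"
    by (rule mult_right_mono) simp
  then have "real (card B) \<le> fact n ^ d * exp (- h + ln 2 * h)"
    by (simp add: mult.assoc flip: exp_add)
  also have "\<dots> \<le> fact n ^ d * exp (- h / 4)"
    using mult_right_mono[OF ln_2_le_3_div_4 \<open>h \<ge> 0\<close>] by simp
  finally show ?thesis
    by (simp add: B_def h_def card_perm_tuples)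
qed

lemma card_e_L_small_le_of_card_ge:
  assumes "n > 0" and "L \<subseteq> {1..d}" and "I \<subseteq> {1..n}" and "J \<subseteq> {1..n}"
    and "k0 \<le> card L" and "n0 \<le> card I" and "n0 \<le> card J"
  shows "real (card {\<pi>\<in>perm_tuples d n.
      real (e_L \<pi> L I J) < real (card L) * real (card I) * real (card J) / (2 * real n)})
    \<le> real (card (perm_tuples d n)) * exp (- real k0 * real n0 ^ 2 / (8 * real n))"
proof -
  have "k0 * (n0 * n0) \<le> card L * (card I * card J)"
    using assms by (intro mult_le_mono) simp_all
  then have "real (k0 * (n0 * n0)) \<le> real (card L * (card I * card J))"
    by (simp only: of_nat_le_iff)
  then have "real k0 * real n0 ^ 2 \<le> real (card L) * real (card I) * real (card J)"
    by (simp add: power2_eq_square mult.assoc)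
  then have "exp (- real (card L) * real (card I) * real (card J) / (8 * real n))
      \<le> exp (- real k0 * real n0 ^ 2 / (8 * real n))"
    using divide_right_mono[of _ _ "8 * real n"] by simp
  then have "real (card (perm_tuples d n)) * exp (- real (card L) * real (card I) * real (card J) / (8 * real n))
      \<le> real (card (perm_tuples d n)) * exp (- real k0 * real n0 ^ 2 / (8 * real n))"
    by (rule mult_left_mono) simp
  with card_e_L_small_le[OF assms(1-4)] show ?thesis
    by (rule order_trans)
qed

subsection \<open>Union bound\<close>

lemma card_not_no_holes_le:
  assumes "n > 0"
  shows "real (card {\<pi>\<in>perm_tuples d n. \<not> no_holes d n k0 n0 \<pi>})
    \<le> real (card (perm_tuples d n)) * (2 ^ (d + 2 * n) * exp (- real k0 * real n0 ^ 2 / (8 * real n)))"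
proof -
  define \<Omega> where "\<Omega> = perm_tuples d n"
  define LL where "LL = {L. L \<subseteq> {1..d} \<and> k0 \<le> card L}"
  define II where "II = {I. I \<subseteq> {1..n} \<and> n0 \<le> card I}"
  define Bad where "Bad L I J =
    {\<pi>\<in>\<Omega>. real (e_L \<pi> L I J) < real (card L) * real (card I) * real (card J) / (2 * real n)}" for L I J
  define M where "M = real (card \<Omega>) * exp (- real k0 * real n0 ^ 2 / (8 * real n))"
  have "LL \<subseteq> Pow {1..d}" "II \<subseteq> Pow {1..n}"
    by (auto simp: LL_def II_def)
  then have "finite LL" "card LL \<le> 2 ^ d" "finite II" "card II \<le> 2 ^ n"
    using card_mono[of "Pow {1..d}" LL] card_mono[of "Pow {1..n}" II]
    by (auto simp: card_Pow intro: finite_subset[of _ "Pow _"])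
  have "finite (Bad L I J)" for L I J
    using finite_perm_tuples by (simp add: Bad_def \<Omega>_def)
  have Bad_le: "real (card (Bad L I J)) \<le> M" if "L \<in> LL" "I \<in> II" "J \<in> II" for L I J
    using card_e_L_small_le_of_card_ge[OF \<open>n > 0\<close>, of L d I J k0 n0] that
    unfolding Bad_def M_def \<Omega>_def LL_def II_def by simp
  have "{\<pi>\<in>\<Omega>. \<not> no_holes d n k0 n0 \<pi>} \<subseteq> (\<Union>L\<in>LL. \<Union>I\<in>II. \<Union>J\<in>II. Bad L I J)"
    unfolding no_holes_def Bad_def LL_def II_def \<Omega>_def by (auto simp: not_le)
  then have "card {\<pi>\<in>\<Omega>. \<not> no_holes d n k0 n0 \<pi>} \<le> card (\<Union>L\<in>LL. \<Union>I\<in>II. \<Union>J\<in>II. Bad L I J)"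
    by (rule card_mono[rotated]) (simp add: \<open>finite LL\<close> \<open>finite II\<close> \<open>\<And>L I J. finite (Bad L I J)\<close>)
  also have "\<dots> \<le> (\<Sum>L\<in>LL. card (\<Union>I\<in>II. \<Union>J\<in>II. Bad L I J))"
    by (rule card_UN_le[OF \<open>finite LL\<close>])
  also have "\<dots> \<le> (\<Sum>L\<in>LL. \<Sum>I\<in>II. card (\<Union>J\<in>II. Bad L I J))"
    by (intro sum_mono card_UN_le[OF \<open>finite II\<close>])
  also have "\<dots> \<le> (\<Sum>L\<in>LL. \<Sum>I\<in>II. \<Sum>J\<in>II. card (Bad L I J))"
    by (intro sum_mono card_UN_le[OF \<open>finite II\<close>])
  finally have "real (card {\<pi>\<in>\<Omega>. \<not> no_holes d n k0 n0 \<pi>})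
      \<le> (\<Sum>L\<in>LL. \<Sum>I\<in>II. \<Sum>J\<in>II. real (card (Bad L I J)))"
    by (simp flip: of_nat_sum)
  also have "\<dots> \<le> (\<Sum>L\<in>LL. \<Sum>I\<in>II. \<Sum>J\<in>II. M)"
    by (intro sum_mono Bad_le)
  also have "\<dots> = real (card LL) * real (card II) * real (card II) * M"
    by simp
  also have "\<dots> \<le> 2 ^ d * 2 ^ n * 2 ^ n * M"
    using \<open>card LL \<le> 2 ^ d\<close> \<open>card II \<le> 2 ^ n\<close>
    by (intro mult_mono) (simp_all add: M_def of_nat_le_iff[symmetric])
  also have "\<dots> = real (card \<Omega>) * (2 ^ (d + 2 * n) * exp (- real k0 * real n0 ^ 2 / (8 * real n)))"
    by (simp add: M_def power_add mult_2 mult_2_right ac_simps)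
  finally show ?thesis
    by (simp add: \<Omega>_def)
qed

lemma prob_no_holes_ge:
  assumes "real (card {\<pi>\<in>perm_tuples d n. \<not> no_holes d n k0 n0 \<pi>}) \<le> real (card (perm_tuples d n)) * \<epsilon>"
  shows "prob_no_holes d n k0 n0 \<ge> 1 - \<epsilon>"
proof -
  let ?\<Omega> = "perm_tuples d n" and ?good = "{\<pi>\<in>perm_tuples d n. no_holes d n k0 n0 \<pi>}"
  have "card ?good + card {\<pi>\<in>?\<Omega>. \<not> no_holes d n k0 n0 \<pi>} = card ?\<Omega>"
    by (rule card_filter_add_card_filter_not[OF finite_perm_tuples])
  then have "real (card ?good) \<ge> real (card ?\<Omega>) * (1 - \<epsilon>)"
    using assms by (simp add: algebra_simps flip: of_nat_add)
  moreover have "card ?\<Omega> > 0"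
    by (simp add: card_perm_tuples)
  ultimately show ?thesis
    by (simp add: prob_no_holes_def pos_le_divide_eq mult.commute)
qed

theorem lemma4p1:
  shows "\<exists>C::real. C > 0 \<and>
    (\<forall>n d k0 n0 :: nat. 1 \<le> d \<longrightarrow> d \<le> 10 * n \<longrightarrow>
       k0 \<in> {1..d} \<longrightarrow> n0 \<in> {1..n} \<longrightarrow>
       real k0 * real n0 ^ 2 \<ge> C * real n ^ 2 \<longrightarrow>
       prob_no_holes d n k0 n0 \<ge> 1 - exp (- real n))"
proof (intro exI[of _ 200] conjI allI impI)
  show "(200::real) > 0"
    by simp
next
  fix n d k0 n0 :: nat
  assume "1 \<le> d" "d \<le> 10 * n" and big: "real k0 * real n0 ^ 2 \<ge> 200 * real n ^ 2"
  then have "n > 0"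
    by simp
  have "(2::real) ^ (d + 2 * n) \<le> exp (ln 2) ^ (12 * n)"
    using power_increasing[of "d + 2 * n" "12 * n" "2::real"] \<open>d \<le> 10 * n\<close> by simp
  also have "\<dots> = exp (real (12 * n) * ln 2)"
    by (rule exp_of_nat_mult[symmetric])
  also have "\<dots> \<le> exp (9 * real n)"
    using mult_left_mono[OF ln_2_le_3_div_4, of "real n"] by simp
  finally have "(2::real) ^ (d + 2 * n) * exp (- real k0 * real n0 ^ 2 / (8 * real n))
      \<le> exp (9 * real n) * exp (- 25 * real n)"
    using big \<open>n > 0\<close> by (intro mult_mono) (simp_all add: field_simps power2_eq_square)
  also have "\<dots> \<le> exp (- real n)"
    by (simp flip: exp_add)
  finally show "prob_no_holes d n k0 n0 \<ge> 1 - exp (- real n)"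
    using prob_no_holes_ge[OF card_not_no_holes_le[OF \<open>n > 0\<close>, of d k0 n0]] by linarith
qed

end
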